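(* Let $n\ge1$, $\mathbb{P}\in\mathcal{P}_n$, $\gamma\in S_{inv}$ and $\pi\in S_n$. Then $R_n(\mathbb{P})=R_n({}^{\gamma}\mathbb{P}\pi)$.
   Context: Scheduling on two machines with $n$ tasks. A processing-time matrix is $T\in\mathbb{R}_{++}^{2\times n}$; an allocation is $X\in\{0,1\}^{2\times n}$ with $X_{1j}+X_{2j}=1$; makespan $M(X,T)=\max_{i\in\{1,2\}}\sum_jX_{ij}T_{ij}$; $M^*(T)=\min_XM(X,T)$. $\mathcal{P}_n$ is the set of Borel probability measures on $\mathbb{R}^n$ supported in $\mathbb{R}_{++}^n$. For $\mathbb{P}\in\mathcal{P}_n$, algorithm $\mathcal{A}^{\mathbb{P}}$ draws $\mathbf{z}\sim\mathbb{P}$ and sends task $j$ to machine 1 iff $T_{1j}/T_{2j}<z_j$ (else to machine 2); $M(\mathbb{P},T)$ is its expected makespan, $R_n(\mathbb{P},T)=M(\mathbb{P},T)/M^*(T)$, $R_n(\mathbb{P})=\sup_TR_n(\mathbb{P},T)\in[1,\infty]$. $S_n$ is the symmetric group on $[n]$; for $\mathbf{z}\in\mathbb{R}^n$ and $\pi\in S_n$, $\mathbf{z}\pi$ is the vector obtained by permuting the entries of $\mathbf{z}$ by $\pi$. $S_{inv}=\{id,inv\}$ acts on $\mathbb{R}_{++}^n$ by ${}^{id}\mathbf{x}=\mathbf{x}$ and ${}^{inv}\mathbf{x}=(1/x_1,\dots,1/x_n)$. For $\mathbb{P}\in\mathcal{P}_n$, ${}^{\gamma}\mathbb{P}\pi\in\mathcal{P}_n$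 denotes the distribution of ${}^{\gamma}\mathbf{z}\pi$ where $\mathbf{z}\sim\mathbb{P}$. *)

theory Defs
  imports "HOL-Probability.Probability"
begin

text \<open>Tasks are indexed by a finite type 'n (so n = CARD('n) >= 1).
  A processing-time matrix T is given by its two rows T1, T2 :: real^'n.
  An allocation X is represented by the set S of tasks sent to machine 1.\<close>

definition pos_vec :: "real^'n \<Rightarrow> bool" where
  "pos_vec x \<longleftrightarrow> (\<forall>j. 0 < x $ j)"

definition makespan :: "'n::finite set \<Rightarrow> real^'n \<Rightarrow> real^'n \<Rightarrow> real" where
  "makespan S T1 T2 = max (\<Sum>j\<in>S. T1 $ j) (\<Sum>j\<in>-S. T2 $ j)"

definition opt_makespan :: "real^'n::finite \<Rightarrow> real^'n \<Rightarrow> real" where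
  "opt_makespan T1 T2 = Min ((\<lambda>S. makespan S T1 T2) ` UNIV)"

definition alloc_of :: "real^'n \<Rightarrow> real^'n \<Rightarrow> real^'n \<Rightarrow> 'n set" where
  "alloc_of T1 T2 z = {j. T1 $ j / T2 $ j < z $ j}"

definition exp_makespan :: "(real^'n::finite) measure \<Rightarrow> real^'n \<Rightarrow> real^'n \<Rightarrow> real" where
  "exp_makespan P T1 T2 = (\<integral>z. makespan (alloc_of T1 T2 z) T1 T2 \<partial>P)"

definition ratio_T :: "(real^'n::finite) measure \<Rightarrow> real^'n \<Rightarrow> real^'n \<Rightarrow> real" where
  "ratio_T P T1 T2 = exp_makespan P T1 T2 / opt_makespan T1 T2"

definition approx_ratio :: "(real^'n::finite) measure \<Rightarrow> ereal" where
  "approx_ratio P = (SUP T \<in> {(T1, T2). pos_vec T1 \<and> pos_vec T2}.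
      ereal (ratio_T P (fst T) (snd T)))"

text \<open>The class P_n: Borel probability measures on R^n supported in the positive orthant.\<close>
definition valid_dist :: "(real^'n) measure \<Rightarrow> bool" where
  "valid_dist P \<longleftrightarrow> prob_space P \<and> sets P = sets borel \<and> (AE z in P. pos_vec z)"

definition perm_vec :: "('n \<Rightarrow> 'n) \<Rightarrow> real^'n \<Rightarrow> real^'n" where
  "perm_vec \<pi> z = (\<chi> j. z $ (\<pi> j))"

definition inv_vec :: "real^'n \<Rightarrow> real^'n" where
  "inv_vec z = (\<chi> j. 1 / z $ j)"

end

theory Submission
  imports Defs
begin

text \<open>Relabelling the tasks by \<open>\<pi>\<close> permutes the thresholds, the allocation and both
  loads consistently, so the ratio of the permuted distribution on an instance equals the
  ratio of the original one on the permuted instance. Inverting the thresholds and swapping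
  the machines turns the rule \<open>T1/T2 < z\<close> into \<open>T2/T1 \<le> z\<close>: the same algorithm with the
  opposite tie-breaking. Shrinking one row of the swapped instance by a factor \<open>c < 1\<close>
  removes the ties, and as \<open>c \<rightarrow> 1\<close> dominated convergence exhibits every ratio of the
  inverted distribution as a limit of ratios of the original one. Inversion is an
  involution, so the two suprema coincide.\<close>

lemma borel_measurable_vec_nth [measurable]: "(\<lambda>z::real^'n. z $ j) \<in> borel_measurable borel"
  by (intro borel_measurable_continuous_onI continuous_intros)

lemma borel_measurable_vecI:
  fixes f :: "'a \<Rightarrow> real^'n"
  assumes "\<And>j. (\<lambda>x. f x $ j) \<in> borel_measurable M"
  shows "f \<in> borel_measurable M"
proof (rule borel_measurable_euclidean_space[THEN iffD2], rule ballI)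
  fix i :: "real^'n" assume "i \<in> Basis"
  then obtain k where "i = axis k 1" by (auto simp: Basis_vec_def)
  then have "(\<lambda>x. f x \<bullet> i) = (\<lambda>x. f x $ k)" by (simp add: inner_axis)
  with assms[of k] show "(\<lambda>x. f x \<bullet> i) \<in> borel_measurable M" by (simp only:)
qed

lemma borel_measurable_inv_vec [measurable]: "inv_vec \<in> borel_measurable borel"
  unfolding inv_vec_def by (rule borel_measurable_vecI) simp

lemma borel_measurable_perm_vec [measurable]: "perm_vec \<pi> \<in> borel_measurable borel"
  unfolding perm_vec_def by (rule borel_measurable_vecI) simp

lemma makespan_eq_sum_If:
  "makespan S a b = max (\<Sum>j\<in>UNIV. if j \<in> S then a $ j else 0) (\<Sum>j\<in>UNIV. if j \<in> S then 0 else b $ j)"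
  unfolding makespan_def by (simp add: sum.If_cases Compl_eq_Diff_UNIV)

lemma borel_measurable_makespan:
  assumes "\<And>j. {z \<in> space M. j \<in> S z} \<in> sets M"
  shows "(\<lambda>z. makespan (S z) a b) \<in> borel_measurable M"
  unfolding makespan_eq_sum_If
  by (intro borel_measurable_max borel_measurable_sum measurable_If borel_measurable_const assms)

lemma borel_measurable_makespan_alloc_of [measurable]:
  "(\<lambda>z. makespan (alloc_of T1 T2 z) a b) \<in> borel_measurable borel"
  unfolding alloc_of_def by (rule borel_measurable_makespan) measurable

lemma borel_measurable_makespan_threshold [measurable]:
  "(\<lambda>z::real^'n. makespan {j. t j \<le> z $ j} a b) \<in> borel_measurable borel"
  by (rule borel_measurable_makespan) measurable

lemma pred_pos_vec [measurable]: "Measurable.pred borel (pos_vec :: real^'n::finite \<Rightarrow> bool)"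
  unfolding pos_vec_def by measurable

lemma measurable_valid_dist: "valid_dist P \<Longrightarrow> measurable P M = measurable borel M"
  unfolding valid_dist_def by (auto intro: measurable_cong_sets)

lemma makespan_nonneg: "pos_vec a \<Longrightarrow> pos_vec b \<Longrightarrow> 0 \<le> makespan S a b"
  unfolding makespan_def pos_vec_def by (simp add: le_max_iff_disj sum_nonneg less_imp_le)

lemma makespan_pos:
  assumes "pos_vec a" "pos_vec b"
  shows "0 < makespan S a b"
proof (cases "S = UNIV")
  case True
  then have "0 < sum (($) a) S" using assms(1) by (auto simp: pos_vec_def intro!: sum_pos)
  then show ?thesis unfolding makespan_def by simp
next
  case False
  then have "0 < sum (($) b) (-S)" using assms(2) by (auto simp: pos_vec_def intro!: sum_pos)
  then show ?thesis unfolding makespan_def by simp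
qed

lemma makespan_le_sum:
  assumes "pos_vec a" "pos_vec b"
  shows "makespan S a b \<le> sum (($) a) UNIV + sum (($) b) UNIV"
proof -
  have "sum (($) a) S \<le> sum (($) a) UNIV" "0 \<le> sum (($) a) UNIV"
    using assms(1) by (auto simp: pos_vec_def less_imp_le intro: sum_mono2 sum_nonneg)
  moreover have "sum (($) b) (-S) \<le> sum (($) b) UNIV" "0 \<le> sum (($) b) UNIV"
    using assms(2) by (auto simp: pos_vec_def less_imp_le intro: sum_mono2 sum_nonneg)
  ultimately show ?thesis unfolding makespan_def by simp
qed

lemma makespan_Compl: "makespan (-S) a b = makespan S b a"
  unfolding makespan_def by (simp add: max.commute)

lemma opt_makespan_le: "opt_makespan a b \<le> makespan S a b"
  unfolding opt_makespan_def by (rule Min_le) auto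

lemma opt_makespan_attained:
  obtains S where "opt_makespan a b = makespan S a b"
proof -
  have "opt_makespan a b \<in> (\<lambda>S. makespan S a b) ` UNIV"
    unfolding opt_makespan_def by (rule Min_in) auto
  then show ?thesis using that by blast
qed

lemma opt_makespan_pos: "pos_vec a \<Longrightarrow> pos_vec b \<Longrightarrow> 0 < opt_makespan a b"
  by (metis opt_makespan_attained makespan_pos)

lemma opt_makespan_eqI:
  assumes "surj g" and "\<And>S. makespan (g S) a b = makespan S a' b'"
  shows "opt_makespan a b = opt_makespan a' b'"
proof -
  have "(\<lambda>S. makespan S a b) ` UNIV = (\<lambda>S. makespan S a b) ` range g"
    using assms(1) by simp
  also have "\<dots> = (\<lambda>S. makespan S a' b') ` UNIV"
    by (simp add: image_image assms(2))
  finally show ?thesis unfolding opt_makespan_def by simp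
qed

lemma opt_makespan_commute: "opt_makespan a b = opt_makespan b a"
  by (rule opt_makespan_eqI[of uminus]) (auto intro: surjI[of _ uminus] simp: makespan_Compl)

lemma perm_vec_nth [simp]: "perm_vec \<pi> a $ j = a $ \<pi> j"
  unfolding perm_vec_def by simp

lemma perm_vec_inv_perm_vec:
  assumes "\<pi> permutes UNIV"
  shows "perm_vec (inv \<pi>) (perm_vec \<pi> a) = a"
  by (simp add: vec_eq_iff permutes_inverses(1)[OF assms])

lemma perm_vec_perm_vec_inv:
  assumes "\<pi> permutes UNIV"
  shows "perm_vec \<pi> (perm_vec (inv \<pi>) a) = a"
  by (simp add: vec_eq_iff permutes_inverses(2)[OF assms])

lemma pos_vec_perm_vec:
  assumes "\<pi> permutes UNIV"
  shows "pos_vec (perm_vec \<pi> a) \<longleftrightarrow> pos_vec a"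
  unfolding pos_vec_def perm_vec_nth by (metis assms permutes_inverses(1))

lemma makespan_image_permutes:
  assumes "\<pi> permutes UNIV"
  shows "makespan (\<pi> ` S) a b = makespan S (perm_vec \<pi> a) (perm_vec \<pi> b)"
proof -
  have bij: "bij \<pi>" using assms permutes_bij by blast
  then have "- (\<pi> ` S) = \<pi> ` (-S)" by (simp add: bij_image_Compl_eq)
  with bij show ?thesis
    unfolding makespan_def by (simp add: sum.reindex[OF inj_on_subset[OF bij_is_inj subset_UNIV]])
qed

lemma opt_makespan_perm_vec:
  assumes "\<pi> permutes UNIV"
  shows "opt_makespan (perm_vec \<pi> a) (perm_vec \<pi> b) = opt_makespan a b"
proof (rule sym, rule opt_makespan_eqI[of "image \<pi>"])
  show "surj (image \<pi>)"
    by (rule surjI[of _ "image (inv \<pi>)"]) (simp add: image_comp permutes_inv_o(1)[OF assms])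
qed (rule makespan_image_permutes[OF assms])

lemma alloc_of_perm_vec:
  assumes "\<pi> permutes UNIV"
  shows "alloc_of (perm_vec \<pi> a) (perm_vec \<pi> b) (perm_vec \<pi> z) = inv \<pi> ` alloc_of a b z"
proof -
  have "alloc_of (perm_vec \<pi> a) (perm_vec \<pi> b) (perm_vec \<pi> z) = \<pi> -` alloc_of a b z"
    unfolding alloc_of_def by auto
  then show ?thesis using bij_vimage_eq_inv_image[OF permutes_bij[OF assms]] by simp
qed

lemma exp_makespan_distr_perm_vec:
  assumes "\<pi> permutes UNIV" and "sets Q = sets borel"
  shows "exp_makespan (distr Q borel (perm_vec \<pi>)) (perm_vec \<pi> a) (perm_vec \<pi> b)
       = exp_makespan Q a b"
proof -
  have meas: "perm_vec \<pi> \<in> borel_measurable Q"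
    using measurable_cong_sets[OF assms(2) refl] borel_measurable_perm_vec by blast
  have "makespan (inv \<pi> ` S) (perm_vec \<pi> a) (perm_vec \<pi> b) = makespan S a b" for S
    by (simp only: makespan_image_permutes[OF permutes_inv[OF assms(1)]] perm_vec_inv_perm_vec[OF assms(1)])
  then show ?thesis
    unfolding exp_makespan_def integral_distr[OF meas borel_measurable_makespan_alloc_of]
    by (simp only: alloc_of_perm_vec[OF assms(1)])
qed

lemma approx_ratio_distr_perm_vec:
  fixes Q :: "(real^'n::finite) measure"
  assumes "\<pi> permutes UNIV" and "sets Q = sets borel"
  shows "approx_ratio (distr Q borel (perm_vec \<pi>)) = approx_ratio Q"
proof -
  let ?pos = "{(T1, T2). pos_vec T1 \<and> pos_vec T2} :: ((real^'n) \<times> (real^'n)) set"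
  let ?perm = "\<lambda>(a, b). (perm_vec \<pi> a, perm_vec \<pi> b)"
  let ?ratio = "\<lambda>P T. ereal (ratio_T P (fst T) (snd T))"
  have pos: "?perm ` ?pos = ?pos"
  proof
    show "?pos \<subseteq> ?perm ` ?pos"
    proof (clarify)
      fix a b :: "real^'n" assume "pos_vec a" "pos_vec b"
      then show "(a, b) \<in> ?perm ` ?pos"
        using pos_vec_perm_vec[OF permutes_inv[OF assms(1)]] perm_vec_perm_vec_inv[OF assms(1)]
        by (intro image_eqI[of _ _ "(perm_vec (inv \<pi>) a, perm_vec (inv \<pi>) b)"]) auto
    qed
  qed (auto simp: pos_vec_perm_vec[OF assms(1)])
  have ratio: "?ratio (distr Q borel (perm_vec \<pi>)) (?perm T) = ?ratio Q T" for T
    unfolding ratio_T_def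
    by (simp add: case_prod_beta exp_makespan_distr_perm_vec[OF assms] opt_makespan_perm_vec[OF assms(1)])
  have "approx_ratio (distr Q borel (perm_vec \<pi>)) = (SUP T\<in>?perm ` ?pos. ?ratio (distr Q borel (perm_vec \<pi>)) T)"
    by (simp only: approx_ratio_def pos)
  also have "\<dots> = (SUP T\<in>?pos. ?ratio Q T)"
    by (simp only: image_image ratio)
  finally show ?thesis unfolding approx_ratio_def .
qed

lemma alloc_of_inv_vec:
  assumes "pos_vec a" "pos_vec b" "pos_vec z"
  shows "alloc_of a b (inv_vec z) = - {j. b $ j / a $ j \<le> z $ j}"
proof -
  have "a $ j / b $ j < 1 / z $ j \<longleftrightarrow> \<not> b $ j / a $ j \<le> z $ j" for j
    using assms[unfolded pos_vec_def, rule_format, of j] by (auto simp: field_simps)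
  then show ?thesis unfolding alloc_of_def inv_vec_def by auto
qed

lemma makespan_scaleR: "makespan S (c *\<^sub>R b) a = max (c * sum (($) b) S) (sum (($) a) (-S))"
  unfolding makespan_def by (simp add: sum_distrib_left)

lemma makespan_scaleR_le:
  assumes "pos_vec b" "c \<le> 1"
  shows "makespan S (c *\<^sub>R b) a \<le> makespan S b a"
proof -
  have "0 \<le> sum (($) b) S" using assms(1) by (auto simp: pos_vec_def less_imp_le intro: sum_nonneg)
  then have "c * sum (($) b) S \<le> sum (($) b) S" using mult_right_mono[OF assms(2)] by simp
  then show ?thesis unfolding makespan_scaleR by (simp add: makespan_def)
qed

lemma mult_makespan_le_makespan_scaleR:
  assumes "pos_vec a" "0 \<le> c" "c \<le> 1"
  shows "c * makespan S b a \<le> makespan S (c *\<^sub>R b) a"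
proof -
  have "0 \<le> sum (($) a) (-S)" using assms(1) by (auto simp: pos_vec_def less_imp_le intro: sum_nonneg)
  then have "c * sum (($) a) (-S) \<le> sum (($) a) (-S)" using assms(2,3) by (rule mult_left_le_one_le)
  moreover have "c * makespan S b a = max (c * sum (($) b) S) (c * sum (($) a) (-S))"
    unfolding makespan_def using assms(2) by (simp add: max_mult_distrib_left)
  ultimately show ?thesis unfolding makespan_scaleR by simp
qed

lemma opt_makespan_scaleR_le:
  assumes "pos_vec b" "c \<le> 1"
  shows "opt_makespan (c *\<^sub>R b) a \<le> opt_makespan b a"
  by (metis opt_makespan_attained opt_makespan_le makespan_scaleR_le[OF assms] order_trans)

lemma mult_opt_makespan_le_opt_makespan_scaleR:
  assumes "pos_vec a" "0 \<le> c" "c \<le> 1"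
  shows "c * opt_makespan b a \<le> opt_makespan (c *\<^sub>R b) a"
proof -
  obtain S where S: "opt_makespan (c *\<^sub>R b) a = makespan S (c *\<^sub>R b) a"
    using opt_makespan_attained by blast
  have "c * opt_makespan b a \<le> c * makespan S b a"
    using assms(2) opt_makespan_le by (rule mult_left_mono[rotated])
  also have "\<dots> \<le> makespan S (c *\<^sub>R b) a" by (rule mult_makespan_le_makespan_scaleR[OF assms])
  finally show ?thesis using S by simp
qed

lemma tendsto_makespan_scaleR:
  "(c \<longlongrightarrow> 1) F \<Longrightarrow> ((\<lambda>x. makespan S (c x *\<^sub>R b) a) \<longlongrightarrow> makespan S b a) F"
  unfolding makespan_scaleR using tendsto_max[OF tendsto_mult[of c 1 F] tendsto_const]
  by (fastforce simp: makespan_def)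

lemma tendsto_opt_makespan_scaleR:
  assumes "pos_vec a" "pos_vec b" "c \<longlonglongrightarrow> 1" "\<And>k. 0 \<le> c k" "\<And>k. c k \<le> 1"
  shows "(\<lambda>k. opt_makespan (c k *\<^sub>R b) a) \<longlonglongrightarrow> opt_makespan b a"
proof (rule tendsto_sandwich[of "\<lambda>k. c k * opt_makespan b a" _ _ "\<lambda>_. opt_makespan b a"])
  show "(\<lambda>k. c k * opt_makespan b a) \<longlonglongrightarrow> opt_makespan b a"
    using tendsto_mult[OF assms(3) tendsto_const, of "opt_makespan b a"] by simp
  show "\<forall>\<^sub>F k in sequentially. c k * opt_makespan b a \<le> opt_makespan (c k *\<^sub>R b) a"
    by (intro always_eventually allI mult_opt_makespan_le_opt_makespan_scaleR assms)
  show "\<forall>\<^sub>F k in sequentially. opt_makespan (c k *\<^sub>R b) a \<le> opt_makespan b a"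
    by (intro always_eventually allI opt_makespan_scaleR_le assms)
qed simp

lemma eventually_alloc_of_scaleR:
  assumes "pos_vec a" "pos_vec b" "c \<longlonglongrightarrow> 1" "\<And>k. c k < 1"
  shows "\<forall>\<^sub>F k in sequentially. alloc_of (c k *\<^sub>R b) a z = {j. b $ j / a $ j \<le> z $ j}"
proof -
  have "\<forall>\<^sub>F k in sequentially. c k * (b $ j / a $ j) < z $ j \<longleftrightarrow> b $ j / a $ j \<le> z $ j" for j
  proof (cases "b $ j / a $ j \<le> z $ j")
    case True
    have "0 < b $ j / a $ j" using assms(1,2) by (simp add: pos_vec_def)
    then have "c k * (b $ j / a $ j) < b $ j / a $ j" for k
      using mult_strict_right_mono[OF assms(4)[of k]] by (metis mult_1)
    then show ?thesis using True by (auto intro: always_eventually order.strict_trans2)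
  next
    case False
    have "(\<lambda>k. c k * (b $ j / a $ j)) \<longlonglongrightarrow> b $ j / a $ j"
      using tendsto_mult[OF assms(3) tendsto_const, of "b $ j / a $ j"] by simp
    then have "\<forall>\<^sub>F k in sequentially. z $ j < c k * (b $ j / a $ j)"
      using False by (intro order_tendstoD(1)) auto
    then show ?thesis by eventually_elim (use False in auto)
  qed
  then have "\<forall>\<^sub>F k in sequentially. \<forall>j. c k * (b $ j / a $ j) < z $ j \<longleftrightarrow> b $ j / a $ j \<le> z $ j"
    by (rule eventually_all_finite)
  then show ?thesis by eventually_elim (auto simp: alloc_of_def)
qed

lemma tendsto_exp_makespan_scaleR:
  assumes P: "valid_dist P" and "pos_vec a" "pos_vec b"
    and c: "c \<longlonglongrightarrow> 1" "\<And>k. 0 < c k" "\<And>k. c k < 1"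
  shows "(\<lambda>k. exp_makespan P (c k *\<^sub>R b) a)
    \<longlonglongrightarrow> (\<integral>z. makespan {j. b $ j / a $ j \<le> z $ j} b a \<partial>P)"
  unfolding exp_makespan_def
proof (rule integral_dominated_convergence[where w="\<lambda>_. sum (($) b) UNIV + sum (($) a) UNIV"])
  interpret prob_space P using P unfolding valid_dist_def by simp
  show "(\<lambda>z. makespan {j. b $ j / a $ j \<le> z $ j} b a) \<in> borel_measurable P"
    unfolding measurable_valid_dist[OF P] by measurable
  show "(\<lambda>z. makespan (alloc_of (c k *\<^sub>R b) a z) (c k *\<^sub>R b) a) \<in> borel_measurable P" for k
    unfolding measurable_valid_dist[OF P] by measurable
  show "integrable P (\<lambda>_. sum (($) b) UNIV + sum (($) a) UNIV)" by simp
  show "AE z in P. norm (makespan (alloc_of (c k *\<^sub>R b) a z) (c k *\<^sub>R b) a)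
      \<le> sum (($) b) UNIV + sum (($) a) UNIV" for k
  proof (rule AE_I2)
    fix z
    let ?S = "alloc_of (c k *\<^sub>R b) a z"
    have "pos_vec (c k *\<^sub>R b)" using assms(3) c(2)[of k] by (simp add: pos_vec_def)
    then have "0 \<le> makespan ?S (c k *\<^sub>R b) a" using assms(2) by (rule makespan_nonneg)
    moreover have "makespan ?S (c k *\<^sub>R b) a \<le> sum (($) b) UNIV + sum (($) a) UNIV"
      using makespan_scaleR_le[OF assms(3) less_imp_le[OF c(3)]] makespan_le_sum[OF assms(3,2)]
      by (rule order_trans)
    ultimately show "norm (makespan ?S (c k *\<^sub>R b) a) \<le> sum (($) b) UNIV + sum (($) a) UNIV"
      by simp
  qed
  show "AE z in P. (\<lambda>k. makespan (alloc_of (c k *\<^sub>R b) a z) (c k *\<^sub>R b) a)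
      \<longlonglongrightarrow> makespan {j. b $ j / a $ j \<le> z $ j} b a"
  proof (rule AE_I2)
    fix z
    have "\<forall>\<^sub>F k in sequentially. makespan {j. b $ j / a $ j \<le> z $ j} (c k *\<^sub>R b) a
        = makespan (alloc_of (c k *\<^sub>R b) a z) (c k *\<^sub>R b) a"
      using eventually_alloc_of_scaleR[OF assms(2,3) c(1,3), of z] by eventually_elim simp
    then show "(\<lambda>k. makespan (alloc_of (c k *\<^sub>R b) a z) (c k *\<^sub>R b) a)
      \<longlonglongrightarrow> makespan {j. b $ j / a $ j \<le> z $ j} b a"
      by (rule Lim_transform_eventually[OF tendsto_makespan_scaleR[OF c(1)]])
  qed
qed

lemma exp_makespan_distr_inv_vec:
  assumes P: "valid_dist P" and "pos_vec a" "pos_vec b"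
  shows "exp_makespan (distr P borel inv_vec) a b
    = (\<integral>z. makespan {j. b $ j / a $ j \<le> z $ j} b a \<partial>P)"
proof -
  have "inv_vec \<in> borel_measurable P"
    unfolding measurable_valid_dist[OF P] by measurable
  then have "exp_makespan (distr P borel inv_vec) a b
      = (\<integral>z. makespan (alloc_of a b (inv_vec z)) a b \<partial>P)"
    unfolding exp_makespan_def by (rule integral_distr) measurable
  also have "\<dots> = (\<integral>z. makespan {j. b $ j / a $ j \<le> z $ j} b a \<partial>P)"
  proof (rule integral_cong_AE)
    show "AE z in P. makespan (alloc_of a b (inv_vec z)) a b
        = makespan {j. b $ j / a $ j \<le> z $ j} b a"
      using P unfolding valid_dist_def
      by (auto elim!: AE_mp simp: alloc_of_inv_vec[OF assms(2,3)] makespan_Compl)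
  qed (unfold measurable_valid_dist[OF P], measurable)
  finally show ?thesis .
qed

lemma ratio_T_le_approx_ratio:
  "pos_vec a \<Longrightarrow> pos_vec b \<Longrightarrow> ereal (ratio_T P a b) \<le> approx_ratio P"
  unfolding approx_ratio_def by (rule SUP_upper2[of "(a, b)"]) auto

lemma approx_ratio_distr_inv_vec_le:
  fixes P :: "(real^'n::finite) measure"
  assumes P: "valid_dist P"
  shows "approx_ratio (distr P borel inv_vec) \<le> approx_ratio P"
  unfolding approx_ratio_def[of "distr P borel inv_vec"]
proof (rule SUP_least, clarify)
  fix a b :: "real^'n" assume a: "pos_vec a" and b: "pos_vec b"
  define c where "c k = 1 - inverse (real (Suc (Suc k)))" for k
  have c_bounds: "0 < c k" "c k < 1" for k unfolding c_def by (auto simp: field_simps)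
  have "(\<lambda>k. 1 - inverse (real (Suc (Suc k)))) \<longlonglongrightarrow> 1 - 0"
    by (intro tendsto_diff tendsto_const LIMSEQ_Suc[OF LIMSEQ_inverse_real_of_nat])
  then have c_lim: "c \<longlonglongrightarrow> 1" unfolding c_def by simp
  \<comment> \<open>\<open>(c k *\<^sub>R b, a)\<close> is the swapped instance with its first row shrunk, free of ties\<close>
  have "(\<lambda>k. ratio_T P (c k *\<^sub>R b) a) \<longlonglongrightarrow> ratio_T (distr P borel inv_vec) a b"
    unfolding ratio_T_def exp_makespan_distr_inv_vec[OF P a b] opt_makespan_commute[of a b]
    using c_bounds opt_makespan_pos[OF b a]
    by (intro tendsto_divide tendsto_exp_makespan_scaleR tendsto_opt_makespan_scaleR P a b c_lim)
      (auto intro: less_imp_le)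
  then have "(\<lambda>k. ereal (ratio_T P (c k *\<^sub>R b) a)) \<longlonglongrightarrow> ereal (ratio_T (distr P borel inv_vec) a b)"
    by (simp only: lim_ereal)
  moreover have "ereal (ratio_T P (c k *\<^sub>R b) a) \<le> approx_ratio P" for k
    using b c_bounds(1)[of k] by (intro ratio_T_le_approx_ratio a) (simp add: pos_vec_def)
  ultimately show "ereal (ratio_T (distr P borel inv_vec) (fst (a, b)) (snd (a, b))) \<le> approx_ratio P"
    unfolding fst_conv snd_conv by (auto intro: LIMSEQ_le_const2)
qed

lemma valid_dist_distr_inv_vec:
  assumes P: "valid_dist P"
  shows "valid_dist (distr P borel inv_vec)"
proof -
  have meas: "inv_vec \<in> borel_measurable P"
    unfolding measurable_valid_dist[OF P] by measurable
  have "AE z in P. pos_vec (inv_vec z)"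
    using P unfolding valid_dist_def by (auto elim!: AE_mp simp: pos_vec_def inv_vec_def)
  then show ?thesis
    using P meas unfolding valid_dist_def by (auto simp: prob_space.prob_space_distr AE_distr_iff)
qed

lemma distr_inv_vec_inv_vec:
  assumes P: "valid_dist P"
  shows "distr (distr P borel inv_vec) borel inv_vec = P"
proof -
  have sets: "sets P = sets borel" using P unfolding valid_dist_def by simp
  have meas: "inv_vec \<in> borel_measurable P"
    unfolding measurable_valid_dist[OF P] by measurable
  have "distr (distr P borel inv_vec) borel inv_vec = distr P borel (inv_vec \<circ> inv_vec)"
    using meas by (simp add: distr_distr)
  also have "\<dots> = distr P borel id"
  proof (rule distr_cong_AE)
    show "AE z in P. (inv_vec \<circ> inv_vec) z = id z"
      using P unfolding valid_dist_def by (auto elim!: AE_mp simp: pos_vec_def inv_vec_def vec_eq_iff)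
  qed (unfold measurable_valid_dist[OF P], measurable)
  also have "\<dots> = P" using distr_id2[OF sets[symmetric]] by (simp add: id_def)
  finally show ?thesis .
qed

lemma approx_ratio_distr_inv_vec:
  "valid_dist P \<Longrightarrow> approx_ratio (distr P borel inv_vec) = approx_ratio P"
  using approx_ratio_distr_inv_vec_le[of P] approx_ratio_distr_inv_vec_le[of "distr P borel inv_vec"]
  by (simp add: valid_dist_distr_inv_vec distr_inv_vec_inv_vec)

theorem theorem3:
  fixes P :: "(real^'n::finite) measure"
    and \<pi> :: "'n \<Rightarrow> 'n"
    and \<gamma> :: "real^'n \<Rightarrow> real^'n"
  assumes "valid_dist P"
    and "\<gamma> \<in> {id, inv_vec}"
    and "\<pi> permutes UNIV"
  shows "approx_ratio P = approx_ratio (distr P borel (\<lambda>z. perm_vec \<pi> (\<gamma> z)))"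
proof -
  have sets: "sets P = sets borel" using assms(1) unfolding valid_dist_def by simp
  have "approx_ratio (distr P borel \<gamma>) = approx_ratio P"
    using assms(2) approx_ratio_distr_inv_vec[OF assms(1)] distr_id2[OF sets[symmetric]]
    by (auto simp: id_def)
  moreover have "\<gamma> \<in> borel_measurable P"
    using assms(2) unfolding measurable_valid_dist[OF assms(1)] by auto
  then have "distr P borel (\<lambda>z. perm_vec \<pi> (\<gamma> z)) = distr (distr P borel \<gamma>) borel (perm_vec \<pi>)"
    by (simp add: distr_distr comp_def)
  ultimately show ?thesis
    using approx_ratio_distr_perm_vec[OF assms(3), of "distr P borel \<gamma>"] by simp
qed

end
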